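(* Let $p\notin\{2,3,11\}$ be a prime, $\ell\in\{0,\dots,N-1\}$, and let $b\in\mathbb Q\cap\mathbb Z_p$ satisfy $f_\ell(b)=0$. Then $\ell+Nb$ is a twisted rational zero of $T$.
   Context: $\Lambda$ is the set of roots of $P(X)=X^3-X^2-X-1$, $c_\lambda=\lambda P'(\lambda)^{-1}$; $T(n)=\sum_\lambda c_\lambda\lambda^n$ is the Tribonacci sequence. Fix an embedding of $\overline{\mathbb Q}$ into an algebraic closure of $\mathbb Q_p$. $\mathbb K=\mathbb Q_p(\Lambda)$, $\mathcal O$ its ring of integers, $N=N_p$ the order of the subgroup of $(\mathcal O/p\mathcal O)^\times$ generated by the images of $\Lambda$, and $f_\ell(z)=\sum_{\lambda\in\Lambda}c_\lambda\lambda^\ell\exp(z\log(\lambda^N))$ for $z\in\mathbb Z_p$ (p-adic exp and log). For $r=s/m\in\mathbb Q$ ($m>0$), a determination of $\lambda^r$ is any algebraic number $\mu$ with $\mu^m=\lambda^s$. A rational number $r$ is a twisted rational zero of $T$ if there exist determinations $\mu_i$ of $\lambda_i^r$ ($i=1,2,3$) and roots of unity $\xi_1,\xi_2,\xi_3$ with $\sum_{i=1}^3\xi_ic_{\lambda_i}\mu_i=0$. *)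

theory Defs
  imports "HOL-Computational_Algebra.Computational_Algebra"
begin

definition padic_val_rat :: "nat \<Rightarrow> rat \<Rightarrow> int" where
  "padic_val_rat p r = (case quotient_of r of (a, b) \<Rightarrow>
      int (multiplicity (int p) a) - int (multiplicity (int p) b))"

definition padic_abs_rat :: "nat \<Rightarrow> rat \<Rightarrow> real" where
  "padic_abs_rat p r = (if r = 0 then 0 else real p powr (- real_of_int (padic_val_rat p r)))"

text \<open>A field F (containing Q) with an absolute value nabs extending |.|_p, non-archimedean,
  complete and algebraically closed (a model of C_p, into which Qbar is embedded).\<close>
definition Cp_like :: "nat \<Rightarrow> ('a::field_char_0 \<Rightarrow> real) \<Rightarrow> bool" where
  "Cp_like p nabs \<longleftrightarrow>
     (\<forall>x. 0 \<le> nabs x) \<and> (\<forall>x. nabs x = 0 \<longleftrightarrow> x = 0) \<and>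
     (\<forall>x y. nabs (x * y) = nabs x * nabs y) \<and>
     (\<forall>x y. nabs (x + y) \<le> max (nabs x) (nabs y)) \<and>
     (\<forall>r. nabs (of_rat r) = padic_abs_rat p r) \<and>
     (\<forall>X::nat \<Rightarrow> 'a. (\<forall>e>0. \<exists>M. \<forall>m\<ge>M. \<forall>n\<ge>M. nabs (X m - X n) < e) \<longrightarrow>
          (\<exists>L. \<forall>e>0. \<exists>M. \<forall>n\<ge>M. nabs (X n - L) < e)) \<and>
     (\<forall>q::'a poly. 0 < degree q \<longrightarrow> (\<exists>x. poly q x = 0))"

definition nsums :: "('a::field \<Rightarrow> real) \<Rightarrow> (nat \<Rightarrow> 'a) \<Rightarrow> 'a \<Rightarrow> bool" where
  "nsums nabs f s \<longleftrightarrow> (\<forall>e>0. \<exists>M. \<forall>n\<ge>M. nabs ((\<Sum>k<n. f k) - s) < e)"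

definition plog :: "('a::field_char_0 \<Rightarrow> real) \<Rightarrow> 'a \<Rightarrow> 'a" where
  "plog nabs x = (THE s. nsums nabs (\<lambda>n. (-1) ^ n * (x - 1) ^ (n + 1) / of_nat (n + 1)) s)"

definition pexp :: "('a::field_char_0 \<Rightarrow> real) \<Rightarrow> 'a \<Rightarrow> 'a" where
  "pexp nabs z = (THE s. nsums nabs (\<lambda>n. z ^ n / fact n) s)"

definition tribP :: "'a::field \<Rightarrow> 'a" where
  "tribP x = x ^ 3 - x ^ 2 - x - 1"

definition tribP' :: "'a::field \<Rightarrow> 'a" where
  "tribP' x = 3 * x ^ 2 - 2 * x - 1"

definition Lam :: "'a::field set" where
  "Lam = {x. tribP x = 0}"

definition cc :: "'a::field \<Rightarrow> 'a" where
  "cc x = x / tribP' x"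

text \<open>N = order of the subgroup of (O/pO)^* generated by the images of Lambda:
  least n > 0 with lambda^n = 1 mod pO for all roots, i.e. |lambda^n - 1| <= |p|.\<close>
definition tribN :: "nat \<Rightarrow> ('a::field_char_0 \<Rightarrow> real) \<Rightarrow> nat" where
  "tribN p nabs = (LEAST n. 0 < n \<and> (\<forall>x\<in>(Lam::'a set). nabs (x ^ n - 1) \<le> 1 / real p))"

definition f_ell :: "nat \<Rightarrow> ('a::field_char_0 \<Rightarrow> real) \<Rightarrow> nat \<Rightarrow> 'a \<Rightarrow> 'a" where
  "f_ell p nabs l z = (\<Sum>x\<in>(Lam::'a set). cc x * x ^ l * pexp nabs (z * plog nabs (x ^ tribN p nabs)))"

definition root_of_unity :: "'a::field \<Rightarrow> bool" where
  "root_of_unity \<xi> \<longleftrightarrow> (\<exists>k>0. \<xi> ^ k = 1)"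

text \<open>Twisted rational zero, with r = s/m written in lowest terms (m > 0).
  The mu_i are determinations of lambda_i^r; they are algebraic automatically.\<close>
definition twisted_rational_zero :: "'a::field_char_0 itself \<Rightarrow> rat \<Rightarrow> bool" where
  "twisted_rational_zero _ r = (case quotient_of r of (s, m) \<Rightarrow>
     (\<exists>l1 l2 l3 \<mu>1 \<mu>2 \<mu>3 \<xi>1 \<xi>2 \<xi>3 :: 'a.
        (Lam::'a set) = {l1, l2, l3} \<and> l1 \<noteq> l2 \<and> l1 \<noteq> l3 \<and> l2 \<noteq> l3 \<and>
        \<mu>1 ^ nat m = l1 powi s \<and> \<mu>2 ^ nat m = l2 powi s \<and> \<mu>3 ^ nat m = l3 powi s \<and>
        root_of_unity \<xi>1 \<and> root_of_unity \<xi>2 \<and> root_of_unity \<xi>3 \<and>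
        \<xi>1 * cc l1 * \<mu>1 + \<xi>2 * cc l2 * \<mu>2 + \<xi>3 * cc l3 * \<mu>3 = 0))"

end

theory Submission
  imports Defs
begin

(* For a root \<lambda> of the Tribonacci polynomial, \<lambda>^N is congruent to 1 mod p, so
   \<mu>_\<lambda> = \<lambda>^l exp(b log \<lambda>^N) is defined for b = s/m with p not dividing m.
   As exp is additive and exp (log y) = y on the disc |y - 1| \<le> 1/p, we get
   \<mu>_\<lambda>^m = \<lambda>^(lm + Ns): so \<mu>_\<lambda> is a determination of \<lambda>^r, r = l + Nb, for the
   representation r = (lm + Ns)/m, and it differs by a root of unity from a determination
   for r in lowest terms. The hypothesis f_l(b) = 0 says exactly that
   \<Sum> c_\<lambda> \<mu>_\<lambda> = 0.

   The analytic input is Legendre's bound |1/n!| \<le> p^(n/(p-1)). For odd p it makes the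
   exponential and logarithm series converge geometrically on that disc, and it bounds the
   coefficients of the truncations of exp(log(1 + X)), whose low-degree coefficients are
   those of 1 + X; comparing with these truncations gives exp (log y) = y. *)

section \<open>The Tribonacci polynomial\<close>

lemma tribP_root_simple:
  fixes x :: "'a::field_char_0"
  assumes "tribP x = 0"
  shows "tribP' x \<noteq> 0"
proof
  assume "tribP' x = 0"
  then have "(x - 1) * (3 * x + 1) = 0"
    by (simp add: tribP'_def algebra_simps power2_eq_square)
  then have "x - 1 = 0 \<or> 3 * x + 1 = 0"
    by simp
  then consider "x = 1" | "3 * x = -1"
    using add_eq_0_iff2 by auto
  then show False
  proof cases
    case 1
    then show False using assms by (simp add: tribP_def)
  next
    case 2
    have "27 * tribP x = (3*x)^3 - 3*(3*x)^2 - 9*(3*x) - 27"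
      by (simp add: tribP_def algebra_simps power2_eq_square power3_eq_cube)
    then show False using assms 2 by simp
  qed
qed

lemma tribP_three_distinct_roots:
  assumes "\<forall>q::'a::field_char_0 poly. 0 < degree q \<longrightarrow> (\<exists>x. poly q x = 0)"
  shows "\<exists>a b c::'a. Lam = {a, b, c} \<and> a \<noteq> b \<and> a \<noteq> c \<and> b \<noteq> c"
proof -
  obtain a where a: "poly [:-1, -1, -1, 1::'a:] a = 0"
    using assms[rule_format, of "[:-1, -1, -1, 1:]"] by auto
  obtain b where b: "poly [:a^2 - a - 1, a - 1, 1::'a:] b = 0"
    using assms[rule_format, of "[:a^2 - a - 1, a - 1, 1:]"] by auto
  define c where "c = 1 - a - b"
  have bc: "b * c = a^2 - a - 1"
    using b unfolding c_def by (simp add: algebra_simps power2_eq_square)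
  have a_inv: "a * (a^2 - a - 1) = 1"
    using a by (simp add: algebra_simps power2_eq_square)
  have "a * b + a * c = a - a^2"
    unfolding c_def by (simp add: algebra_simps power2_eq_square)
  then have vieta: "a + b + c = 1" "a * b + a * c + b * c = -1" "a * b * c = 1"
    using a_inv bc by (simp_all add: c_def mult.assoc)
  have factor: "tribP x = (x - a) * (x - b) * (x - c)" for x
  proof -
    have "(x - a) * (x - b) * (x - c)
        = x^3 - (a + b + c) * x^2 + (a * b + a * c + b * c) * x - a * b * c"
      by (simp add: algebra_simps power2_eq_square power3_eq_cube)
    then show ?thesis unfolding vieta tribP_def by simp
  qed
  have deriv: "tribP' x = (x - b) * (x - c) + (x - a) * (x - c) + (x - a) * (x - b)" for x
  proof -
    have "(x - b) * (x - c) + (x - a) * (x - c) + (x - a) * (x - b)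
        = 3 * x^2 - 2 * (a + b + c) * x + (a * b + a * c + b * c)"
      by (simp add: algebra_simps power2_eq_square)
    then show ?thesis unfolding vieta tribP'_def by simp
  qed
  have simple: "tribP' x \<noteq> 0" if "x \<in> {a, b, c}" for x
    using that by (intro tribP_root_simple) (auto simp: factor)
  have "a \<noteq> b" "a \<noteq> c" "b \<noteq> c"
    using simple[of a] simple[of b] deriv[of a] deriv[of b] by auto
  moreover have "Lam = {a, b, c}" unfolding Lam_def using factor by auto
  ultimately show ?thesis by blast
qed

fun trib_coeffs :: "nat \<Rightarrow> int \<times> int \<times> int" where
  "trib_coeffs 0 = (1, 0, 0)"
| "trib_coeffs (Suc n) = (case trib_coeffs n of (a, b, c) \<Rightarrow> (c, a + c, b + c))"

lemma tribP_root_power: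
  fixes x :: "'a::field"
  assumes "tribP x = 0" and "trib_coeffs n = (a, b, c)"
  shows "x ^ n = of_int a + of_int b * x + of_int c * x^2"
  using assms(2)
proof (induction n arbitrary: a b c)
  case (Suc n)
  obtain a' b' c' where prev: "trib_coeffs n = (a', b', c')"
    by (cases "trib_coeffs n") auto
  have coeffs: "a = c'" "b = a' + c'" "c = b' + c'"
    using Suc.prems prev by simp_all
  have "x^3 = x^2 + x + 1"
    using assms(1) by (simp add: tribP_def algebra_simps)
  have "x ^ Suc n = of_int a' * x + of_int b' * x^2 + of_int c' * x^3"
    using Suc.IH[OF prev] by (simp add: algebra_simps power2_eq_square power3_eq_cube)
  also have "\<dots> = of_int c' + of_int (a' + c') * x + of_int (b' + c') * x^2"
    using \<open>x^3 = x^2 + x + 1\<close> by (simp add: algebra_simps)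
  finally show ?case
    unfolding coeffs .
qed simp

section \<open>Non-archimedean absolute values\<close>

locale nonarch_abs =
  fixes nabs :: "'a::field \<Rightarrow> real"
  assumes nabs_nonneg: "0 \<le> nabs x"
    and nabs_eq_0_iff [simp]: "nabs x = 0 \<longleftrightarrow> x = 0"
    and nabs_mult: "nabs (x * y) = nabs x * nabs y"
    and nabs_add_le_max: "nabs (x + y) \<le> max (nabs x) (nabs y)"
begin

lemma nabs_0 [simp]: "nabs 0 = 0"
  by simp

lemma nabs_pos_iff [simp]: "0 < nabs x \<longleftrightarrow> x \<noteq> 0"
  using nabs_nonneg[of x] nabs_eq_0_iff[of x] by linarith

lemma nabs_1 [simp]: "nabs 1 = 1"
  using nabs_mult[of 1 1] by simp

lemma nabs_minus [simp]: "nabs (- x) = nabs x"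
proof -
  have "nabs (-1) * nabs (-1) = 1"
    by (simp flip: nabs_mult)
  then have "nabs (-1) = 1"
    using nabs_nonneg[of "-1"] by (metis abs_of_nonneg abs_square_eq_1 power2_eq_square)
  then show ?thesis
    using nabs_mult[of "-1" x] by simp
qed

lemma nabs_minus_commute: "nabs (x - y) = nabs (y - x)"
  by (metis minus_diff_eq nabs_minus)

lemma nabs_diff_triangle: "nabs (x - z) \<le> max (nabs (x - y)) (nabs (y - z))"
  using nabs_add_le_max[of "x - y" "y - z"] by simp

lemma nabs_power: "nabs (x ^ n) = nabs x ^ n"
  by (induction n) (simp_all add: nabs_mult)

lemma nabs_inverse: "nabs (inverse x) = inverse (nabs x)"
proof (cases "x = 0")
  case False
  then have "nabs x * nabs (inverse x) = 1"
    by (simp flip: nabs_mult)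
  then show ?thesis
    by (metis inverse_unique)
qed simp

lemma nabs_divide: "nabs (x / y) = nabs x / nabs y"
  by (simp add: divide_inverse nabs_mult nabs_inverse)

lemma nabs_sum_le:
  assumes "finite S" and "\<And>i. i \<in> S \<Longrightarrow> nabs (f i) \<le> B" and "0 \<le> B"
  shows "nabs (sum f S) \<le> B"
  using assms
proof (induction S rule: finite_induct)
  case (insert x F)
  then have "nabs (f x) \<le> B" and "nabs (sum f F) \<le> B"
    by simp_all
  then show ?case
    using nabs_add_le_max[of "f x" "sum f F"] insert.hyps by simp
qed simp

lemma nabs_of_nat_le_1: "nabs (of_nat n) \<le> 1"
proof (induction n)
  case (Suc n)
  then show ?case
    using nabs_add_le_max[of 1 "of_nat n"] by simp
qed simp

lemma nabs_of_int_le_1: "nabs (of_int a) \<le> 1"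
  by (cases a rule: int_cases) (simp_all add: nabs_of_nat_le_1 del: of_nat_Suc)

lemma nabs_of_nat_mult_le: "nabs (of_nat m * x) \<le> nabs x"
  using mult_right_mono[OF nabs_of_nat_le_1[of m] nabs_nonneg[of x]] by (simp add: nabs_mult)

lemma nabs_power_diff_le:
  assumes "nabs x \<le> R" and "nabs y \<le> R"
  shows "nabs (x ^ Suc n - y ^ Suc n) \<le> nabs (x - y) * R ^ n"
proof (induction n)
  case (Suc n)
  have R: "0 \<le> R"
    using assms(1) nabs_nonneg order_trans by blast
  have "x ^ Suc (Suc n) - y ^ Suc (Suc n) = x * (x ^ Suc n - y ^ Suc n) + (x - y) * y ^ Suc n"
    by (simp add: algebra_simps)
  then have "nabs (x ^ Suc (Suc n) - y ^ Suc (Suc n))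
      \<le> max (nabs x * nabs (x ^ Suc n - y ^ Suc n)) (nabs (x - y) * nabs y ^ Suc n)"
    using nabs_add_le_max[of "x * (x ^ Suc n - y ^ Suc n)" "(x - y) * y ^ Suc n"]
    by (simp only: nabs_mult nabs_power)
  moreover have "nabs x * nabs (x ^ Suc n - y ^ Suc n) \<le> R * (nabs (x - y) * R ^ n)"
    using Suc assms R by (intro mult_mono) (auto simp: nabs_nonneg)
  moreover have "nabs (x - y) * nabs y ^ Suc n \<le> nabs (x - y) * R ^ Suc n"
    using assms(2) by (intro mult_left_mono power_mono) (auto simp: nabs_nonneg)
  ultimately show ?case
    by (simp add: ac_simps)
qed simp

lemma nabs_tribP_root:
  assumes "tribP x = 0"
  shows "nabs x = 1"
proof -
  have le_max: "nabs (u + v + w) \<le> max (max (nabs u) (nabs v)) (nabs w)" for u v w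
    using nabs_add_le_max[of "u + v" w] nabs_add_le_max[of u v] by linarith
  have le: "nabs x \<le> 1"
  proof (rule ccontr)
    assume "\<not> nabs x \<le> 1"
    then have gt: "1 < nabs x" by simp
    have "x^3 = x^2 + x + 1"
      using assms by (simp add: tribP_def algebra_simps)
    then have "nabs x ^ 3 = nabs (x^2 + x + 1)"
      by (metis nabs_power)
    also have "\<dots> \<le> max (max (nabs x ^ 2) (nabs x)) 1"
      using le_max[of "x^2" x 1] by (simp add: nabs_power)
    also have "\<dots> = nabs x ^ 2"
      using gt mult_left_mono[of 1 "nabs x" "nabs x"] by (auto simp: power2_eq_square max_def)
    finally show False
      using gt power_strict_increasing[of 2 3 "nabs x"] by simp
  qed
  have "x * (x^2 - x - 1) = 1"
    using assms by (simp add: tribP_def algebra_simps power2_eq_square power3_eq_cube)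
  then have "nabs x * nabs (x^2 - x - 1) = 1"
    by (metis nabs_1 nabs_mult)
  moreover have "nabs (x^2 - x - 1) \<le> 1"
    using le_max[of "x^2" "- x" "- 1"] le nabs_nonneg[of x]
    by (simp add: nabs_power power_le_one)
  ultimately have "1 \<le> nabs x"
    using mult_left_mono[of "nabs (x^2 - x - 1)" 1 "nabs x"] nabs_nonneg[of x] by simp
  then show ?thesis
    using le by simp
qed

definition ntendsto :: "(nat \<Rightarrow> 'a) \<Rightarrow> 'a \<Rightarrow> bool" where
  "ntendsto X L \<longleftrightarrow> (\<forall>e>0. \<exists>M. \<forall>n\<ge>M. nabs (X n - L) < e)"

lemma nsums_iff_ntendsto: "nsums nabs f s \<longleftrightarrow> ntendsto (\<lambda>n. \<Sum>k<n. f k) s"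
  unfolding nsums_def ntendsto_def ..

lemma eq_if_nabs_diff_less:
  assumes "\<And>e. 0 < e \<Longrightarrow> nabs (x - y) < e"
  shows "x = y"
  using assms[of "nabs (x - y)"] by force

lemma ntendsto_close_eq:
  assumes "ntendsto X a" and "ntendsto Y b"
    and "\<And>e. 0 < e \<Longrightarrow> \<exists>M. \<forall>n\<ge>M. nabs (X n - Y n) < e"
  shows "a = b"
proof (rule eq_if_nabs_diff_less)
  fix e :: real
  assume "0 < e"
  then obtain M1 M2 M3 where "\<forall>n\<ge>M1. nabs (X n - a) < e" "\<forall>n\<ge>M2. nabs (Y n - b) < e"
    "\<forall>n\<ge>M3. nabs (X n - Y n) < e"
    using assms unfolding ntendsto_def by meson
  moreover define n where "n = max M1 (max M2 M3)"
  ultimately have "nabs (a - X n) < e" "nabs (X n - Y n) < e" "nabs (Y n - b) < e"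
    by (auto simp: nabs_minus_commute[of a])
  moreover have "nabs (a - b) \<le> max (nabs (a - X n)) (max (nabs (X n - Y n)) (nabs (Y n - b)))"
    using nabs_diff_triangle[of a b "X n"] nabs_diff_triangle[of "X n" b "Y n"]
    by (meson max.mono order.refl order.trans)
  ultimately show "nabs (a - b) < e"
    by simp
qed

lemma ntendsto_unique: "ntendsto X a \<Longrightarrow> ntendsto X b \<Longrightarrow> a = b"
  by (rule ntendsto_close_eq) auto

lemma ntendsto_nabs_le:
  assumes "ntendsto X L" and "\<And>n. nabs (X n) \<le> B"
  shows "nabs L \<le> B"
proof (rule ccontr)
  assume "\<not> nabs L \<le> B"
  then have "0 < nabs L - B"
    by simp
  then obtain M where "\<forall>n\<ge>M. nabs (X n - L) < nabs L - B"
    using assms(1) unfolding ntendsto_def by blast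
  then have M: "nabs (X M - L) < nabs L - B"
    by simp
  have "nabs L \<le> max (nabs (L - X M)) (nabs (X M))"
    using nabs_diff_triangle[of L 0 "X M"] by simp
  then show False
    using M assms(2)[of M] nabs_nonneg[of "X M"] \<open>\<not> nabs L \<le> B\<close> by (simp add: nabs_minus_commute)
qed

lemma ntendsto_mult:
  assumes "ntendsto X a" and "ntendsto Y b" and "\<And>n. nabs (X n) \<le> 1" and "nabs b \<le> 1"
  shows "ntendsto (\<lambda>n. X n * Y n) (a * b)"
  unfolding ntendsto_def
proof (intro allI impI)
  fix e :: real
  assume "0 < e"
  then obtain M1 M2 where M1: "\<forall>n\<ge>M1. nabs (X n - a) < e" and M2: "\<forall>n\<ge>M2. nabs (Y n - b) < e"
    using assms(1,2) unfolding ntendsto_def by meson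
  have "nabs (X n * Y n - a * b) < e" if "max M1 M2 \<le> n" for n
  proof -
    have "X n * Y n - a * b = X n * (Y n - b) + (X n - a) * b"
      by (simp add: algebra_simps)
    then have "nabs (X n * Y n - a * b) \<le> max (nabs (X n) * nabs (Y n - b)) (nabs (X n - a) * nabs b)"
      using nabs_add_le_max[of "X n * (Y n - b)" "(X n - a) * b"] by (simp only: nabs_mult)
    moreover have "nabs (X n) * nabs (Y n - b) \<le> nabs (Y n - b)"
      using mult_right_mono[OF assms(3) nabs_nonneg] by simp
    moreover have "nabs (X n - a) * nabs b \<le> nabs (X n - a)"
      using mult_left_mono[OF assms(4) nabs_nonneg] by simp
    moreover have "nabs (X n - a) < e" "nabs (Y n - b) < e"
      using M1 M2 that by simp_all
    ultimately show ?thesis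
      by simp
  qed
  then show "\<exists>M. \<forall>n\<ge>M. nabs (X n * Y n - a * b) < e"
    by blast
qed

lemma the_nsums: "nsums nabs f s \<Longrightarrow> (THE s. nsums nabs f s) = s"
  using ntendsto_unique unfolding nsums_iff_ntendsto by blast

end

locale complete_nonarch_abs = nonarch_abs +
  assumes complete: "\<And>X :: nat \<Rightarrow> 'a. \<forall>e>0. \<exists>M. \<forall>m\<ge>M. \<forall>n\<ge>M. nabs (X m - X n) < e \<Longrightarrow>
    \<exists>L. \<forall>e>0. \<exists>M. \<forall>n\<ge>M. nabs (X n - L) < e"
begin

lemma nsums_if_nabs_tendsto_0:
  assumes "\<And>e. 0 < e \<Longrightarrow> \<exists>M. \<forall>n\<ge>M. nabs (f n) < e"
  shows "\<exists>s. nsums nabs f s"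
proof -
  define S where "S n = (\<Sum>k<n. f k)" for n
  have "\<exists>M. \<forall>m\<ge>M. \<forall>n\<ge>M. nabs (S m - S n) < e" if "0 < e" for e
  proof -
    obtain M where M: "\<forall>n\<ge>M. nabs (f n) < e / 2"
      using assms[of "e / 2"] \<open>0 < e\<close> by auto
    have half: "nabs (S m - S n) \<le> e / 2" if "M \<le> n" "n \<le> m" for m n
    proof -
      have "S m - S n = (\<Sum>k\<in>{n..<m}. f k)"
        unfolding S_def using that(2) by (metis atLeast0LessThan sum_diff_nat_ivl zero_le)
      also have "nabs \<dots> \<le> e / 2"
        using M that(1) \<open>0 < e\<close> by (intro nabs_sum_le) (auto intro: less_imp_le)
      finally show ?thesis .
    qed
    have "nabs (S m - S n) < e" if "M \<le> m" "M \<le> n" for m n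
      using half[of n m] half[of m n] that \<open>0 < e\<close> nabs_minus_commute[of "S m"]
      by (cases "n \<le> m") auto
    then show ?thesis
      by blast
  qed
  then show ?thesis
    using complete[of S] unfolding nsums_def S_def by blast
qed

lemma nsums_the_if_geometric_bound:
  assumes "0 \<le> \<rho>" and "\<rho> < 1" and "\<And>n. nabs (f n) \<le> c * \<rho> ^ n"
  shows "nsums nabs f (THE s. nsums nabs f s)"
proof -
  have "(\<lambda>n. c * \<rho> ^ n) \<longlonglongrightarrow> 0"
    using assms(1,2) by (intro tendsto_mult_right_zero LIMSEQ_power_zero) simp
  then have "\<exists>M. \<forall>n\<ge>M. nabs (f n) < e" if "0 < e" for e
    using order_tendstoD(2)[of _ 0 sequentially e] that assms(3)
    unfolding eventually_sequentially by (meson le_less_trans)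
  then obtain s where "nsums nabs f s"
    using nsums_if_nabs_tendsto_0 by blast
  then show ?thesis
    using the_nsums by simp
qed

end

section \<open>Truncated exponential and logarithm\<close>

definition exp_partial :: "nat \<Rightarrow> 'a::field_char_0 \<Rightarrow> 'a" where
  "exp_partial K z = (\<Sum>n<K. z ^ n / fact n)"

lemma exp_partial_mult:
  "exp_partial K u * exp_partial K v = (\<Sum>(i, j)\<in>{..<K} \<times> {..<K}. u^i / fact i * (v^j / fact j))"
  unfolding exp_partial_def sum_product sum.cartesian_product by simp

lemma exp_partial_add:
  "exp_partial K (u + v) = (\<Sum>(i, j)\<in>{(i, j). i + j < K}. u^i / fact i * (v^j / fact j))"
proof -
  have "(u + v) ^ n / fact n = (\<Sum>i\<le>n. u^i / fact i * (v^(n - i) / fact (n - i)))" for n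
  proof -
    have "(u + v) ^ n / fact n = (\<Sum>i\<le>n. of_nat (n choose i) * u^i * v^(n - i) / fact n)"
      unfolding binomial_ring by (simp add: sum_divide_distrib)
    also have "\<dots> = (\<Sum>i\<le>n. u^i / fact i * (v^(n - i) / fact (n - i)))"
      by (rule sum.cong) (auto simp: binomial_fact)
    finally show ?thesis .
  qed
  then have "exp_partial K (u + v) = (\<Sum>n<K. \<Sum>i\<le>n. u^i / fact i * (v^(n - i) / fact (n - i)))"
    unfolding exp_partial_def by simp
  also have "\<dots> = (\<Sum>(i, j)\<in>{(i, j). i + j < K}. u^i / fact i * (v^j / fact j))"
    by (rule sum.triangle_reindex[symmetric])
  finally show ?thesis .
qed

definition log_poly :: "nat \<Rightarrow> 'a::field_char_0 poly" where
  "log_poly M = (\<Sum>n<M. monom ((-1) ^ n / of_nat (n + 1)) (n + 1))"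

definition exp_log_poly :: "nat \<Rightarrow> nat \<Rightarrow> 'a::field_char_0 poly" where
  "exp_log_poly K M = (\<Sum>n<K. smult (1 / fact n) (log_poly M ^ n))"

lemma poly_log_poly: "poly (log_poly M) y = (\<Sum>n<M. (-1) ^ n * y ^ (n + 1) / of_nat (n + 1))"
  unfolding log_poly_def poly_sum by (simp add: poly_monom)

lemma poly_exp_log_poly: "poly (exp_log_poly K M) y = exp_partial K (poly (log_poly M) y)"
  unfolding exp_log_poly_def exp_partial_def poly_sum by simp

lemma coeff_log_poly:
  "coeff (log_poly M) k = (if 1 \<le> k \<and> k \<le> M then (-1) ^ (k - 1) / of_nat k else 0)"
proof (cases "1 \<le> k \<and> k \<le> M")
  case True
  then obtain j where j: "k = Suc j" "j < M"
    by (cases k) auto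
  have "coeff (log_poly M) k = (\<Sum>n<M. if n = j then (-1) ^ n / of_nat (n + 1) else 0)"
    unfolding log_poly_def coeff_sum j by (intro sum.cong) auto
  then show ?thesis
    using j by simp
next
  case False
  then show ?thesis
    unfolding log_poly_def coeff_sum by (intro trans[OF sum.neutral]) auto
qed

lemma fps_exp_compose_ln: "fps_exp (1::'a::field_char_0) oo fps_ln 1 = 1 + fps_X"
proof -
  have "(fps_exp (1::'a) - 1) oo fps_ln 1 = fps_X"
    using fps_inv_fps_exp_compose(2)[of "1::'a"] fps_ln_fps_exp_inv[of "1::'a"] by simp
  then have "(fps_exp (1::'a) - 1 + 1) oo fps_ln 1 = fps_X + 1"
    by (simp only: fps_compose_add_distrib fps_compose_1)
  then show ?thesis
    by (simp add: add.commute)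
qed

lemma fps_power_nth_eq_if_prefix_eq:
  fixes A B :: "'a::comm_ring_1 fps"
  assumes "\<And>j. j \<le> k \<Longrightarrow> A $ j = B $ j" and "i \<le> k"
  shows "(A ^ n) $ i = (B ^ n) $ i"
  using assms(2)
proof (induction n arbitrary: i)
  case (Suc n)
  then show ?case
    using assms(1) by (simp add: fps_mult_nth)
qed simp

lemma coeff_exp_log_poly:
  assumes "k < K" and "k \<le> M"
  shows "coeff (exp_log_poly K M :: 'a::field_char_0 poly) k = coeff [:1, 1:] k"
proof -
  have "fps_of_poly (log_poly M) $ j = fps_ln (1::'a) $ j" if "j \<le> M" for j
    using that by (simp add: coeff_log_poly fps_ln_nth)
  then have "(fps_of_poly (log_poly M) ^ n) $ k = (fps_ln (1::'a) ^ n) $ k" for n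
    using assms(2) by (rule fps_power_nth_eq_if_prefix_eq)
  then have "coeff (exp_log_poly K M :: 'a poly) k = (\<Sum>n<K. 1 / fact n * (fps_ln (1::'a) ^ n) $ k)"
    unfolding exp_log_poly_def coeff_sum coeff_smult by (simp flip: fps_of_poly_power)
  also have "\<dots> = (\<Sum>n\<in>{0..k}. 1 / fact n * (fps_ln (1::'a) ^ n) $ k)"
    using assms(1) startsby_zero_power_prefix[of "fps_ln (1::'a)"]
    by (intro sum.mono_neutral_right) auto
  also have "\<dots> = (fps_exp (1::'a) oo fps_ln 1) $ k"
    by (simp add: fps_compose_nth)
  also have "\<dots> = coeff [:1, 1:] k"
    unfolding fps_exp_compose_ln by (cases k) (auto simp: coeff_pCons split: nat.splits)
  finally show ?thesis .
qed

section \<open>The p-adic exponential and logarithm\<close>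

locale padic_field = complete_nonarch_abs nabs for nabs :: "'a::field_char_0 \<Rightarrow> real" +
  fixes p :: nat
  assumes prime_p: "prime p" and odd_p: "odd p"
    and nabs_of_rat: "nabs (of_rat r) = padic_abs_rat p r"
begin

lemma p_ge_3: "3 \<le> p"
proof -
  have "2 \<le> p" "p \<noteq> 2"
    using prime_ge_2_nat[OF prime_p] odd_p by auto
  then show ?thesis
    by linarith
qed

lemma p_pos: "0 < real p"
  using p_ge_3 by simp

lemma nabs_of_int_mult_power_multiplicity:
  assumes "a \<noteq> 0"
  shows "nabs (of_int a) * real p ^ multiplicity (int p) a = 1"
proof -
  have "nabs (of_int a) = nabs (of_rat (of_int a))"
    by simp
  also have "\<dots> = real p powr (- real (multiplicity (int p) a))"
    using assms unfolding nabs_of_rat padic_abs_rat_def padic_val_rat_def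
    by (simp add: quotient_of_int[unfolded Rat.of_int_def[symmetric]])
  finally show ?thesis
    using p_pos by (simp add: powr_minus powr_realpow)
qed

lemma nabs_of_int_eq_1_if_not_dvd: "\<not> int p dvd a \<Longrightarrow> nabs (of_int a) = 1"
  using nabs_of_int_mult_power_multiplicity[of a] not_dvd_imp_multiplicity_0[of "int p" a]
  by fastforce

lemma nabs_of_nat_p: "nabs (of_nat p) = 1 / real p"
proof -
  have "multiplicity (int p) (int p) = 1"
    using prime_p by (intro multiplicity_self) (auto simp: prime_gt_1_nat)
  then have "nabs (of_int (int p)) * real p = 1"
    using nabs_of_int_mult_power_multiplicity[of "int p"] p_pos by simp
  then show ?thesis
    using p_pos by (simp add: field_simps)
qed

lemma nabs_of_int_le_if_dvd:
  assumes "int p dvd a"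
  shows "nabs (of_int a) \<le> 1 / real p"
proof -
  obtain b where "a = int p * b"
    using assms by (elim dvdE)
  then have "nabs (of_int a) = 1 / real p * nabs (of_int b)"
    by (simp add: nabs_mult nabs_of_nat_p)
  also have "\<dots> \<le> 1 / real p"
    using mult_left_mono[OF nabs_of_int_le_1[of b], of "1 / real p"] p_pos by simp
  finally show ?thesis .
qed

text \<open>By Legendre's formula |1/n!| \<le> theta^n; since theta < p for odd p, the exponential and
  logarithm series are dominated by powers of ratio = theta/p < 1 on the disc |z| \<le> 1/p.\<close>

definition theta :: real where
  "theta = real p powr (1 / (real p - 1))"

lemma theta_pos: "0 < theta"
  unfolding theta_def using p_pos by simp

lemma theta_power: "theta ^ (p - 1) = real p"
proof -
  have "theta ^ (p - 1) = real p powr (1 / (real p - 1) * real (p - 1))"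
    unfolding theta_def using p_pos by (simp add: powr_realpow[symmetric] powr_powr)
  also have "1 / (real p - 1) * real (p - 1) = 1"
    using p_ge_3 by (simp add: of_nat_diff)
  finally show ?thesis
    using p_pos by simp
qed

lemma theta_power_mult: "theta ^ (k * (p - 1)) = real p ^ k"
  by (simp only: mult.commute[of k] power_mult theta_power)

lemma one_le_theta: "1 \<le> theta"
  unfolding theta_def using p_ge_3 by (intro ge_one_powr_ge_zero) auto

lemma theta_less_p: "theta < real p"
proof (rule ccontr)
  assume "\<not> theta < real p"
  then have "real p ^ (p - 1) \<le> real p ^ 1"
    using theta_power p_pos power_mono[of "real p" theta "p - 1"] by simp
  moreover have "real p ^ 1 < real p ^ (p - 1)"
    using p_ge_3 by (intro power_strict_increasing) auto
  ultimately show False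
    by simp
qed

lemma nabs_inverse_of_nat_le:
  assumes "0 < j"
  shows "nabs (1 / of_nat j) \<le> theta ^ (j - 1)"
proof -
  define a where "a = multiplicity (int p) (int j)"
  have unit: "nabs (of_nat j) * real p ^ a = 1"
    unfolding a_def using nabs_of_int_mult_power_multiplicity[of "int j"] assms by simp
  have "int p ^ a dvd int j"
    unfolding a_def by (rule multiplicity_dvd)
  then have "p ^ a \<le> j"
    using assms by (simp add: dvd_imp_le flip: of_nat_power)
  then have "real p ^ a \<le> real j"
    by (metis of_nat_le_iff of_nat_power)
  moreover have "1 + real a * (real p - 1) \<le> real p ^ a"
    using Bernoulli_inequality[of "real p - 1" a] p_pos by simp
  ultimately have "real a * (real p - 1) \<le> real j - 1"
    by linarith
  then have "real (a * (p - 1)) \<le> real (j - 1)"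
    using assms p_ge_3 by (simp add: of_nat_diff)
  then have "a * (p - 1) \<le> j - 1"
    by (simp only: of_nat_le_iff)
  then have "theta ^ (a * (p - 1)) \<le> theta ^ (j - 1)"
    using one_le_theta by (intro power_increasing) simp_all
  then have "real p ^ a \<le> theta ^ (j - 1)"
    by (simp only: theta_power_mult)
  moreover have "nabs (1 / of_nat j :: 'a) = real p ^ a"
    unfolding nabs_divide nabs_1 using unit assms by (intro divide_eq_imp) (auto simp: mult.commute)
  ultimately show ?thesis
    by simp
qed

lemma nabs_fact_div_p: "nabs (fact n :: 'a) = (1 / real p) ^ (n div p) * nabs (fact (n div p) :: 'a)"
proof (induction n)
  case (Suc n)
  have step: "nabs (fact (Suc n) :: 'a) = nabs (of_nat (Suc n) :: 'a) * nabs (fact n :: 'a)"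
    by (simp add: nabs_mult)
  show ?case
  proof (cases "p dvd Suc n")
    case False
    then have "Suc n div p = n div p"
      by (simp add: div_Suc dvd_eq_mod_eq_0)
    moreover have "nabs (of_nat (Suc n) :: 'a) = 1"
      using nabs_of_int_eq_1_if_not_dvd[of "int (Suc n)"] False by (simp del: of_nat_Suc)
    ultimately show ?thesis
      using step Suc by simp
  next
    case True
    define i where "i = Suc n div p"
    have i: "i = Suc (n div p)"
      unfolding i_def using True by (simp add: div_Suc dvd_eq_mod_eq_0)
    have "Suc n = p * i"
      unfolding i_def using True by simp
    then have "nabs (of_nat (Suc n) :: 'a) = 1 / real p * nabs (of_nat i :: 'a)"
      by (simp add: nabs_mult nabs_of_nat_p del: of_nat_Suc)
    moreover have "nabs (fact i :: 'a) = nabs (of_nat i :: 'a) * nabs (fact (n div p) :: 'a)"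
      unfolding i by (simp add: nabs_mult)
    ultimately show ?thesis
      using step Suc by (simp add: i_def[symmetric] i)
  qed
qed simp

lemma one_le_nabs_fact_mult_theta_power: "1 \<le> nabs (fact n :: 'a) * theta ^ n"
proof (induction n rule: less_induct)
  case (less n)
  show ?case
  proof (cases "n = 0")
    case False
    define q where "q = n div p"
    have "q < n"
      unfolding q_def using False p_ge_3 by simp
    have "p * q \<le> n"
      unfolding q_def by (metis div_times_less_eq_dividend mult.commute)
    then have "q * (p - 1) \<le> n - q"
      using diff_le_mono[of "p * q" n q] by (metis diff_mult_distrib2 mult.commute mult_1)
    then have "theta ^ (q * (p - 1)) \<le> theta ^ (n - q)"
      using one_le_theta by (intro power_increasing)
    then have "real p ^ q \<le> theta ^ (n - q)"
      by (simp only: theta_power_mult)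
    then have A: "1 \<le> (1 / real p) ^ q * theta ^ (n - q)"
      using p_pos by (simp add: field_simps)
    have B: "1 \<le> nabs (fact q :: 'a) * theta ^ q"
      using less \<open>q < n\<close> by simp
    have "theta ^ n = theta ^ q * theta ^ (n - q)"
      using \<open>q < n\<close> by (simp flip: power_add)
    then have "nabs (fact n :: 'a) * theta ^ n
        = (nabs (fact q :: 'a) * theta ^ q) * ((1 / real p) ^ q * theta ^ (n - q))"
      using nabs_fact_div_p[of n] unfolding q_def[symmetric] by (simp only: ac_simps)
    then show ?thesis
      using mult_mono[OF B A] B by simp
  qed simp
qed

lemma nabs_inverse_fact_le: "nabs (1 / fact n :: 'a) \<le> theta ^ n"
  using one_le_nabs_fact_mult_theta_power[of n] by (simp add: nabs_divide divide_le_eq mult.commute)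

definition ratio :: real where
  "ratio = theta / real p"

lemma ratio_pos: "0 < ratio"
  unfolding ratio_def using theta_pos p_pos by simp

lemma ratio_less_1: "ratio < 1"
  unfolding ratio_def using theta_less_p p_pos by simp

lemma nabs_power_le: "nabs z \<le> 1 / real p \<Longrightarrow> nabs (z ^ n) \<le> (1 / real p) ^ n"
  unfolding nabs_power by (intro power_mono) (simp_all add: nabs_nonneg)

lemma nabs_exp_term_le:
  assumes "nabs z \<le> 1 / real p"
  shows "nabs (z ^ n / fact n) \<le> ratio ^ n"
proof -
  have "nabs (z ^ n / fact n) = nabs (z ^ n) * nabs (1 / fact n :: 'a)"
    by (simp add: nabs_divide)
  also have "\<dots> \<le> (1 / real p) ^ n * theta ^ n"
    using nabs_power_le[OF assms] nabs_inverse_fact_le by (intro mult_mono) (simp_all add: nabs_nonneg)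
  also have "\<dots> = ratio ^ n"
    unfolding ratio_def by (simp add: power_divide)
  finally show ?thesis .
qed

lemma pexp_tendsto:
  assumes "nabs z \<le> 1 / real p"
  shows "ntendsto (\<lambda>K. exp_partial K z) (pexp nabs z)"
proof -
  have "nsums nabs (\<lambda>n. z ^ n / fact n) (pexp nabs z)"
    unfolding pexp_def using ratio_pos ratio_less_1 nabs_exp_term_le[OF assms]
    by (intro nsums_the_if_geometric_bound[where c = 1]) simp_all
  then show ?thesis
    unfolding nsums_iff_ntendsto exp_partial_def .
qed

lemma nabs_exp_partial_le_1:
  assumes "nabs z \<le> 1 / real p"
  shows "nabs (exp_partial K z) \<le> 1"
  unfolding exp_partial_def
proof (rule nabs_sum_le)
  show "nabs (z ^ n / fact n) \<le> 1" for n
    using nabs_exp_term_le[OF assms, of n] ratio_pos ratio_less_1 power_le_one[of ratio n] by simp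
qed simp_all

lemma nabs_pexp_le_1: "nabs z \<le> 1 / real p \<Longrightarrow> nabs (pexp nabs z) \<le> 1"
  using ntendsto_nabs_le[OF pexp_tendsto nabs_exp_partial_le_1] .

lemma nabs_exp_partial_mult_diff_le:
  assumes u: "nabs u \<le> 1 / real p" and v: "nabs v \<le> 1 / real p"
  shows "nabs (exp_partial K u * exp_partial K v - exp_partial K (u + v)) \<le> ratio ^ K"
proof -
  define A where "A = {..<K} \<times> {..<K}"
  define B where "B = {(i, j). i + j < K}"
  define g where "g = (\<lambda>(i, j). u^i / fact i * (v^j / fact j))"
  have "finite A" "B \<subseteq> A"
    unfolding A_def B_def by auto
  then have "exp_partial K u * exp_partial K v - exp_partial K (u + v) = sum g (A - B)"
    unfolding exp_partial_mult exp_partial_add A_def[symmetric] B_def[symmetric] g_def[symmetric]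
    by (simp add: sum_diff)
  also have "nabs \<dots> \<le> ratio ^ K"
  proof (rule nabs_sum_le)
    fix x
    assume "x \<in> A - B"
    moreover obtain i j where ij: "x = (i, j)"
      by (cases x)
    ultimately have "K \<le> i + j"
      unfolding B_def by auto
    have "nabs (g x) = nabs (u^i / fact i) * nabs (v^j / fact j)"
      unfolding ij g_def by (simp only: case_prod_conv nabs_mult)
    also have "\<dots> \<le> ratio ^ i * ratio ^ j"
      using nabs_exp_term_le[OF u] nabs_exp_term_le[OF v] ratio_pos
      by (intro mult_mono) (simp_all add: nabs_nonneg)
    also have "\<dots> \<le> ratio ^ K"
      using ratio_pos ratio_less_1 \<open>K \<le> i + j\<close> by (simp add: power_decreasing flip: power_add)
    finally show "nabs (g x) \<le> ratio ^ K" .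
  qed (use \<open>finite A\<close> ratio_pos in simp_all)
  finally show ?thesis .
qed

lemma pexp_add:
  assumes u: "nabs u \<le> 1 / real p" and v: "nabs v \<le> 1 / real p"
  shows "pexp nabs (u + v) = pexp nabs u * pexp nabs v"
proof (rule ntendsto_close_eq)
  show "ntendsto (\<lambda>K. exp_partial K (u + v)) (pexp nabs (u + v))"
    using nabs_add_le_max[of u v] u v by (intro pexp_tendsto) simp
  show "ntendsto (\<lambda>K. exp_partial K u * exp_partial K v) (pexp nabs u * pexp nabs v)"
    using pexp_tendsto nabs_exp_partial_le_1 nabs_pexp_le_1 u v by (intro ntendsto_mult)
  fix e :: real
  assume "0 < e"
  then obtain M where "ratio ^ M < e"
    using real_arch_pow_inv ratio_less_1 by blast
  have "nabs (exp_partial K (u + v) - exp_partial K u * exp_partial K v) < e" if "M \<le> K" for K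
  proof -
    have "ratio ^ K \<le> ratio ^ M"
      using that ratio_pos ratio_less_1 by (intro power_decreasing) simp_all
    then show ?thesis
      using nabs_exp_partial_mult_diff_le[OF u v, of K] \<open>ratio ^ M < e\<close>
      by (simp add: nabs_minus_commute)
  qed
  then show "\<exists>M. \<forall>K\<ge>M. nabs (exp_partial K (u + v) - exp_partial K u * exp_partial K v) < e"
    by blast
qed

lemma pexp_0: "pexp nabs 0 = 1"
proof (rule ntendsto_unique)
  show "ntendsto (\<lambda>K. exp_partial K 0) (pexp nabs 0)"
    using p_pos by (intro pexp_tendsto) simp
  have "exp_partial K 0 = (1::'a)" if "1 \<le> K" for K
    using that unfolding exp_partial_def
    by (cases K) (simp_all add: lessThan_Suc_eq_insert_0 zero_power sum.reindex)
  then show "ntendsto (\<lambda>K. exp_partial K 0) 1"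
    unfolding ntendsto_def by (intro allI impI exI[of _ 1]) simp
qed

lemma pexp_of_nat_mult:
  assumes u: "nabs u \<le> 1 / real p"
  shows "pexp nabs (of_nat m * u) = pexp nabs u ^ m"
proof (induction m)
  case (Suc m)
  have "pexp nabs (of_nat (Suc m) * u) = pexp nabs (u + of_nat m * u)"
    by (simp add: algebra_simps)
  also have "\<dots> = pexp nabs u * pexp nabs (of_nat m * u)"
    using nabs_of_nat_mult_le[of m u] u by (intro pexp_add) simp_all
  finally show ?case
    using Suc by simp
qed (simp add: pexp_0)

lemma pexp_of_int_mult:
  assumes u: "nabs u \<le> 1 / real p"
  shows "pexp nabs (of_int s * u) = pexp nabs u powi s"
proof (cases "0 \<le> s")
  case True
  then show ?thesis
    using pexp_of_nat_mult[OF u, of "nat s"] by (simp add: power_int_def)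
next
  case False
  then obtain m where m: "s = - int m"
    by (metis minus_minus nat_0_le neg_0_le_iff_le nle_le)
  have mu: "nabs (of_nat m * u) \<le> 1 / real p"
    using nabs_of_nat_mult_le[of m u] u by simp
  have "pexp nabs (of_nat m * u) * pexp nabs (- (of_nat m * u)) = 1"
    using pexp_add[OF mu, of "- (of_nat m * u)"] mu by (simp add: pexp_0)
  then have "pexp nabs (- (of_nat m * u)) = inverse (pexp nabs u ^ m)"
    unfolding pexp_of_nat_mult[OF u] by (metis inverse_unique)
  then show ?thesis
    unfolding m by (simp add: power_int_minus)
qed

lemma nabs_log_term_le:
  assumes "nabs y \<le> 1 / real p"
  shows "nabs ((-1) ^ n * y ^ (n + 1) / of_nat (n + 1)) \<le> ratio ^ n / real p"
proof -
  have "nabs ((-1) ^ n * y ^ (n + 1) / of_nat (n + 1)) = nabs (y ^ (n + 1)) * nabs (1 / of_nat (n + 1) :: 'a)"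
    by (simp add: nabs_divide nabs_mult nabs_power)
  also have "\<dots> \<le> (1 / real p) ^ (n + 1) * theta ^ n"
    using nabs_inverse_of_nat_le[of "n + 1"]
    by (intro mult_mono[OF nabs_power_le[OF assms]]) (simp_all add: nabs_nonneg)
  also have "\<dots> = ratio ^ n / real p"
    unfolding ratio_def by (simp add: power_divide)
  finally show ?thesis .
qed

lemma plog_tendsto:
  assumes "nabs (x - 1) \<le> 1 / real p"
  shows "ntendsto (\<lambda>M. poly (log_poly M) (x - 1)) (plog nabs x)"
proof -
  have "nsums nabs (\<lambda>n. (-1) ^ n * (x - 1) ^ (n + 1) / of_nat (n + 1)) (plog nabs x)"
    unfolding plog_def using ratio_pos ratio_less_1 nabs_log_term_le[OF assms]
    by (intro nsums_the_if_geometric_bound[where c = "1 / real p"]) simp_all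
  then show ?thesis
    unfolding nsums_iff_ntendsto poly_log_poly .
qed

lemma nabs_log_poly_le:
  assumes "nabs y \<le> 1 / real p"
  shows "nabs (poly (log_poly M) y) \<le> 1 / real p"
  unfolding poly_log_poly
proof (rule nabs_sum_le)
  show "nabs ((-1) ^ n * y ^ (n + 1) / of_nat (n + 1)) \<le> 1 / real p" for n
    using nabs_log_term_le[OF assms, of n] power_le_one[of ratio n] ratio_pos ratio_less_1 p_pos
    by (smt (verit) divide_right_mono)
qed (use p_pos in simp_all)

lemma nabs_plog_le: "nabs (x - 1) \<le> 1 / real p \<Longrightarrow> nabs (plog nabs x) \<le> 1 / real p"
  using ntendsto_nabs_le[OF plog_tendsto nabs_log_poly_le] .

text \<open>This weight is multiplicative, so it controls all powers of log_poly at once.\<close>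

definition theta_bounded :: "'a poly \<Rightarrow> nat \<Rightarrow> bool" where
  "theta_bounded F d \<longleftrightarrow> (\<forall>k. nabs (coeff F k) * theta ^ d \<le> theta ^ k)"

lemma theta_bounded_1: "theta_bounded 1 0"
  unfolding theta_bounded_def using one_le_theta by (auto simp: coeff_1)

lemma theta_bounded_log_poly: "theta_bounded (log_poly M) 1"
  unfolding theta_bounded_def
proof
  fix k
  show "nabs (coeff (log_poly M) k) * theta ^ 1 \<le> theta ^ k"
  proof (cases "1 \<le> k \<and> k \<le> M")
    case True
    then have "nabs (coeff (log_poly M) k) \<le> theta ^ (k - 1)"
      using nabs_inverse_of_nat_le[of k] by (simp add: coeff_log_poly nabs_divide nabs_mult nabs_power)
    then have "nabs (coeff (log_poly M) k) * theta \<le> theta ^ (k - 1) * theta"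
      using theta_pos by simp
    then show ?thesis
      using True by (cases k) (simp_all add: mult.commute)
  next
    case False
    then have "coeff (log_poly M :: 'a poly) k = 0"
      by (simp add: coeff_log_poly)
    then show ?thesis
      using theta_pos by simp
  qed
qed

lemma theta_bounded_mult:
  assumes "theta_bounded F d" and "theta_bounded G e"
  shows "theta_bounded (F * G) (d + e)"
  unfolding theta_bounded_def
proof
  fix k
  have "nabs (coeff (F * G) k) \<le> theta ^ k / theta ^ (d + e)"
    unfolding coeff_mult
  proof (rule nabs_sum_le)
    fix i
    assume "i \<in> {..k}"
    have "(nabs (coeff F i) * theta ^ d) * (nabs (coeff G (k - i)) * theta ^ e) \<le> theta ^ i * theta ^ (k - i)"
      using assms theta_pos unfolding theta_bounded_def by (intro mult_mono) (simp_all add: nabs_nonneg)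
    also have "\<dots> = theta ^ k"
      using \<open>i \<in> {..k}\<close> by (simp flip: power_add)
    finally show "nabs (coeff F i * coeff G (k - i)) \<le> theta ^ k / theta ^ (d + e)"
      using theta_pos by (simp add: nabs_mult power_add field_simps)
  qed (use theta_pos in simp_all)
  then show "nabs (coeff (F * G) k) * theta ^ (d + e) \<le> theta ^ k"
    using theta_pos by (simp add: field_simps)
qed

lemma theta_bounded_power: "theta_bounded F d \<Longrightarrow> theta_bounded (F ^ n) (n * d)"
  by (induction n) (simp_all add: theta_bounded_1 theta_bounded_mult)

lemma theta_bounded_smult:
  assumes "nabs c \<le> theta ^ d" and "theta_bounded F d"
  shows "theta_bounded (smult c F) 0"
  unfolding theta_bounded_def
proof
  fix k
  have "nabs (coeff (smult c F) k) \<le> theta ^ d * nabs (coeff F k)"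
    using assms(1) by (simp add: nabs_mult mult_right_mono nabs_nonneg)
  also have "\<dots> \<le> theta ^ k"
    using assms(2) unfolding theta_bounded_def by (simp add: mult.commute)
  finally show "nabs (coeff (smult c F) k) * theta ^ 0 \<le> theta ^ k"
    by simp
qed

lemma theta_bounded_sum:
  assumes "finite A" and "\<And>i. i \<in> A \<Longrightarrow> theta_bounded (f i) 0"
  shows "theta_bounded (sum f A) 0"
  unfolding theta_bounded_def coeff_sum
  using assms theta_pos by (auto simp: theta_bounded_def intro!: nabs_sum_le)

lemma nabs_coeff_exp_log_poly_le: "nabs (coeff (exp_log_poly K M) k) \<le> theta ^ k"
proof -
  have "theta_bounded (exp_log_poly K M) 0"
    unfolding exp_log_poly_def
    using nabs_inverse_fact_le theta_bounded_power[OF theta_bounded_log_poly]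
    by (intro theta_bounded_sum theta_bounded_smult) simp_all
  then show ?thesis
    unfolding theta_bounded_def by simp
qed

lemma nabs_exp_partial_diff_le:
  assumes a: "nabs a \<le> 1 / real p" and b: "nabs b \<le> 1 / real p"
  shows "nabs (exp_partial K a - exp_partial K b) \<le> real p * nabs (a - b)"
proof -
  have "exp_partial K a - exp_partial K b = (\<Sum>n<K. (a ^ n - b ^ n) / fact n)"
    unfolding exp_partial_def by (simp add: sum_subtractf diff_divide_distrib)
  also have "nabs \<dots> \<le> real p * nabs (a - b)"
  proof (rule nabs_sum_le)
    show "nabs ((a ^ n - b ^ n) / fact n) \<le> real p * nabs (a - b)" for n
    proof (cases n)
      case (Suc m)
      have "nabs ((a ^ n - b ^ n) / fact n) = nabs (a ^ n - b ^ n) * nabs (1 / fact n :: 'a)"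
        by (simp add: nabs_divide)
      also have "\<dots> \<le> (nabs (a - b) * (1 / real p) ^ m) * theta ^ n"
        unfolding Suc using p_pos
        by (intro mult_mono[OF nabs_power_diff_le[OF a b] nabs_inverse_fact_le]) (simp_all add: nabs_nonneg)
      also have "\<dots> = real p * nabs (a - b) * ratio ^ n"
        unfolding Suc ratio_def using p_pos by (simp add: power_divide field_simps)
      also have "\<dots> \<le> real p * nabs (a - b)"
        using ratio_pos ratio_less_1 p_pos power_le_one[of ratio n]
        by (simp add: mult_left_le nabs_nonneg)
      finally show ?thesis .
    qed (use p_pos in \<open>simp add: nabs_nonneg\<close>)
  qed (use p_pos in \<open>simp_all add: nabs_nonneg\<close>)
  finally show ?thesis .
qed

lemma nabs_exp_log_poly_approx:
  assumes y: "nabs y \<le> 1 / real p" and "M < K" and "1 \<le> M"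
  shows "nabs (poly (exp_log_poly K M) y - (1 + y)) \<le> ratio ^ (M + 1)"
proof -
  define R where "R = (exp_log_poly K M - [:1, 1:] :: 'a poly)"
  have "nabs (poly R y) \<le> ratio ^ (M + 1)"
    unfolding poly_altdef
  proof (rule nabs_sum_le)
    fix k
    show "nabs (coeff R k * y ^ k) \<le> ratio ^ (M + 1)"
    proof (cases "k \<le> M")
      case True
      then have "coeff R k = 0"
        unfolding R_def using coeff_exp_log_poly[of k K M] \<open>M < K\<close> by simp
      then show ?thesis
        using ratio_pos by simp
    next
      case False
      then have "coeff R k = coeff (exp_log_poly K M) k"
        unfolding R_def using \<open>1 \<le> M\<close> by (simp add: coeff_pCons split: nat.splits)
      then have "nabs (coeff R k * y ^ k) \<le> theta ^ k * (1 / real p) ^ k"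
        unfolding nabs_mult using nabs_coeff_exp_log_poly_le nabs_power_le[OF y] theta_pos
        by (intro mult_mono) (simp_all add: nabs_nonneg)
      also have "\<dots> = ratio ^ k"
        unfolding ratio_def by (simp add: power_divide)
      also have "\<dots> \<le> ratio ^ (M + 1)"
        using False ratio_pos ratio_less_1 by (intro power_decreasing) simp_all
      finally show ?thesis .
    qed
  qed (use ratio_pos in simp_all)
  then show ?thesis
    unfolding R_def by simp
qed

theorem pexp_plog:
  assumes "nabs (x - 1) \<le> 1 / real p"
  shows "pexp nabs (plog nabs x) = x"
  \<comment> \<open>exp L \<approx> exp_partial K L \<approx> exp_partial K L_M = poly (exp_log_poly K M) (x - 1) \<approx> x,
    where L_M is the M-th partial sum of L = log x.\<close>
proof (rule eq_if_nabs_diff_less)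
  fix e :: real
  assume "0 < e"
  define L where "L = plog nabs x"
  have L: "nabs L \<le> 1 / real p"
    unfolding L_def using assms by (rule nabs_plog_le)
  have "0 < e / real p"
    using \<open>0 < e\<close> p_pos by simp
  then obtain M0 where M0: "\<forall>M\<ge>M0. nabs (poly (log_poly M) (x - 1) - L) < e / real p"
    using plog_tendsto[OF assms] unfolding ntendsto_def L_def by blast
  obtain M1 where M1: "ratio ^ M1 < e"
    using real_arch_pow_inv[OF \<open>0 < e\<close> ratio_less_1] by blast
  define M where "M = max (max M0 M1) 1"
  define LM where "LM = poly (log_poly M) (x - 1)"
  obtain K0 where K0: "\<forall>K\<ge>K0. nabs (exp_partial K L - pexp nabs L) < e"
    using pexp_tendsto[OF L] \<open>0 < e\<close> unfolding ntendsto_def by blast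
  define K where "K = max K0 (M + 1)"
  have "M < K" "1 \<le> M"
    unfolding K_def M_def by auto
  have "nabs (pexp nabs L - exp_partial K L) < e"
    using K0 by (simp add: K_def nabs_minus_commute)
  moreover have "nabs (exp_partial K L - exp_partial K LM) < e"
  proof -
    have "nabs (exp_partial K L - exp_partial K LM) \<le> real p * nabs (L - LM)"
      unfolding LM_def using L assms by (intro nabs_exp_partial_diff_le nabs_log_poly_le)
    also have "\<dots> < real p * (e / real p)"
      using M0 p_pos by (intro mult_strict_left_mono) (simp_all add: M_def LM_def nabs_minus_commute)
    finally show ?thesis
      using p_pos by simp
  qed
  moreover have "nabs (exp_partial K LM - x) < e"
  proof -
    have "nabs (exp_partial K LM - x) \<le> ratio ^ (M + 1)"
      using nabs_exp_log_poly_approx[OF assms \<open>M < K\<close> \<open>1 \<le> M\<close>]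
      by (simp add: LM_def poly_exp_log_poly)
    also have "\<dots> \<le> ratio ^ M1"
      using ratio_pos ratio_less_1 by (intro power_decreasing) (simp_all add: M_def)
    finally show ?thesis
      using M1 by simp
  qed
  ultimately show "nabs (pexp nabs (plog nabs x) - x) < e"
    using nabs_diff_triangle[of "pexp nabs L" x "exp_partial K L"]
      nabs_diff_triangle[of "exp_partial K L" x "exp_partial K LM"]
    unfolding L_def by simp
qed

lemma pexp_rat_mult_plog_power:
  assumes y: "nabs (y - 1) \<le> 1 / real p" and b: "quotient_of b = (s, m)" and "\<not> int p dvd m"
  shows "pexp nabs (of_rat b * plog nabs y) ^ nat m = y powi s"
proof -
  have "0 < m"
    using quotient_of_denom_pos[OF b] .
  have b_eq: "(of_rat b :: 'a) = of_int s / of_int m"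
    using quotient_of_div[OF b] by (simp add: of_rat_divide)
  have "nabs (of_rat b :: 'a) \<le> 1"
    unfolding b_eq nabs_divide nabs_of_int_eq_1_if_not_dvd[OF \<open>\<not> int p dvd m\<close>]
    using nabs_of_int_le_1 by simp
  then have bL: "nabs (of_rat b * plog nabs y) \<le> 1 / real p"
    using mult_right_mono[of "nabs (of_rat b :: 'a)" 1 "nabs (plog nabs y)"] nabs_plog_le[OF y]
    by (simp add: nabs_mult nabs_nonneg)
  have "pexp nabs (of_rat b * plog nabs y) ^ nat m = pexp nabs (of_nat (nat m) * (of_rat b * plog nabs y))"
    using pexp_of_nat_mult[OF bL] ..
  also have "of_nat (nat m) * (of_rat b * plog nabs y) = of_int s * plog nabs y"
    using \<open>0 < m\<close> by (simp add: b_eq)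
  also have "pexp nabs (of_int s * plog nabs y) = y powi s"
    using pexp_of_int_mult[OF nabs_plog_le[OF y]] pexp_plog[OF y] by simp
  finally show ?thesis .
qed

text \<open>Pigeonhole on the residues mod p of the coordinates of x^n in the basis 1, x, x^2.\<close>

lemma tribP_roots_power_near_1: "\<exists>n>0. \<forall>x\<in>(Lam::'a set). nabs (x ^ n - 1) \<le> 1 / real p"
proof -
  define g where "g n = (case trib_coeffs n of (a, b, c) \<Rightarrow> (a mod int p, b mod int p, c mod int p))" for n
  have "range g \<subseteq> {0..<int p} \<times> {0..<int p} \<times> {0..<int p}"
    unfolding g_def using p_pos by (auto split: prod.splits)
  then have "\<not> inj g"
    using finite_subset infinite_UNIV_nat finite_imageD by blast
  then obtain i j where "g i = g j" "i < j"
    unfolding inj_def by (metis nat_neq_iff)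
  obtain a1 b1 c1 a2 b2 c2 where ti: "trib_coeffs i = (a1, b1, c1)" and tj: "trib_coeffs j = (a2, b2, c2)"
    by (metis prod_cases3)
  have dvd: "int p dvd (a2 - a1)" "int p dvd (b2 - b1)" "int p dvd (c2 - c1)"
    using \<open>g i = g j\<close> ti tj unfolding g_def by (auto simp: mod_eq_dvd_iff dvd_diff_commute)
  show ?thesis
  proof (intro exI conjI ballI)
    show "0 < j - i"
      using \<open>i < j\<close> by simp
    fix x :: 'a
    assume "x \<in> Lam"
    then have x: "tribP x = 0"
      unfolding Lam_def by simp
    have "x ^ j - x ^ i = of_int (a2 - a1) + of_int (b2 - b1) * x + of_int (c2 - c1) * x^2"
      using tribP_root_power[OF x ti] tribP_root_power[OF x tj] by (simp add: algebra_simps)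
    also have "nabs \<dots> \<le> 1 / real p"
      using nabs_of_int_le_if_dvd[OF dvd(1)] nabs_of_int_le_if_dvd[OF dvd(2)] nabs_of_int_le_if_dvd[OF dvd(3)]
        nabs_add_le_max[of "of_int (a2 - a1) + of_int (b2 - b1) * x" "of_int (c2 - c1) * x^2"]
        nabs_add_le_max[of "of_int (a2 - a1)" "of_int (b2 - b1) * x"]
      by (simp add: nabs_mult nabs_power nabs_tribP_root[OF x])
    also have "x ^ j - x ^ i = x ^ i * (x ^ (j - i) - 1)"
      using \<open>i < j\<close> by (simp add: algebra_simps flip: power_add)
    finally show "nabs (x ^ (j - i) - 1) \<le> 1 / real p"
      by (simp add: nabs_mult nabs_power nabs_tribP_root[OF x])
  qed
qed

lemma tribN_spec: "0 < tribN p nabs \<and> (\<forall>x\<in>(Lam::'a set). nabs (x ^ tribN p nabs - 1) \<le> 1 / real p)"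
  unfolding tribN_def by (rule LeastI_ex[OF tribP_roots_power_near_1])

end

section \<open>Twisted rational zeros\<close>

lemma Cp_like_imp_padic_field:
  assumes "Cp_like p nabs" and "prime p" and "odd p"
  shows "padic_field nabs p"
  using assms unfolding Cp_like_def
  by unfold_locales blast+

lemma alg_closed_nth_root:
  fixes c :: "'a::field"
  assumes "\<forall>q::'a poly. 0 < degree q \<longrightarrow> (\<exists>x. poly q x = 0)" and "0 < m"
  shows "\<exists>x. x ^ m = c"
proof -
  have "degree ([:- c:] + monom 1 m) = m"
    using assms(2) by (subst degree_add_eq_right) (auto simp: degree_monom_eq)
  then obtain x where "poly ([:- c:] + monom 1 m) x = 0"
    using assms by metis
  then show ?thesis
    by (auto simp: poly_monom)
qed

lemma root_of_unity_divide:
  fixes u v x :: "'a::field"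
  assumes "u ^ k = x powi A" and "v ^ m = x powi s" and "A * int m = s * int k"
    and "x \<noteq> 0" and "0 < k" and "0 < m"
  shows "root_of_unity (u / v)"
  unfolding root_of_unity_def
proof (intro exI conjI)
  show "0 < k * m"
    using assms by simp
  have "(u / v) ^ (k * m) = (u ^ k) ^ m / (v ^ m) ^ k"
    by (simp add: power_divide flip: power_mult) (simp add: mult.commute)
  also have "\<dots> = x powi (A * int m) / x powi (s * int k)"
    unfolding assms(1,2) power_int_mult by simp
  finally show "(u / v) ^ (k * m) = 1"
    using assms(3,4) by simp
qed

lemma twist_by_root_of_unity:
  fixes u x :: "'a::field"
  assumes alg_closed: "\<forall>q::'a poly. 0 < degree q \<longrightarrow> (\<exists>x. poly q x = 0)"
    and "u ^ k = x powi A" and "A * int n = s * int k" and "x \<noteq> 0" and "0 < k" and "0 < n"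
  obtains v \<xi> where "v ^ n = x powi s" and "root_of_unity \<xi>" and "u = \<xi> * v"
proof -
  obtain v where v: "v ^ n = x powi s"
    using alg_closed_nth_root[OF alg_closed \<open>0 < n\<close>] by blast
  have "v \<noteq> 0"
    using v \<open>x \<noteq> 0\<close> \<open>0 < n\<close> by (auto simp: power_0_left)
  show thesis
  proof (rule that[OF v])
    show "root_of_unity (u / v)"
      using assms(2) v assms(3-6) by (rule root_of_unity_divide)
    show "u = u / v * v"
      using \<open>v \<noteq> 0\<close> by simp
  qed
qed

text \<open>\<mu> x is a determination of x^r for the representation r = A/k, which need not be in lowest
  terms; this is what the twists by roots of unity absorb.\<close>

lemma twisted_rational_zeroI:
  fixes \<mu> :: "'a::field_char_0 \<Rightarrow> 'a" and k :: nat
  assumes alg_closed: "\<forall>q::'a poly. 0 < degree q \<longrightarrow> (\<exists>x. poly q x = 0)"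
    and "0 < k" and r: "r = of_int A / of_nat k"
    and \<mu>: "\<And>x. x \<in> Lam \<Longrightarrow> \<mu> x ^ k = x powi A"
    and sum: "(\<Sum>x\<in>Lam. cc x * \<mu> x) = 0"
  shows "twisted_rational_zero TYPE('a) r"
proof -
  obtain s m where q: "quotient_of r = (s, m)"
    by fastforce
  obtain n where m: "m = int n" and "0 < n"
    using pos_int_cases[OF quotient_of_denom_pos[OF q]] by blast
  have "of_int A / of_nat k = (of_int s / of_nat n :: rat)"
    using quotient_of_div[OF q] unfolding r m by simp
  then have "of_int (A * int n) = (of_int (s * int k) :: rat)"
    using \<open>0 < k\<close> \<open>0 < n\<close> by (simp add: frac_eq_eq)
  then have "A * int n = s * int k"
    by (simp only: of_int_eq_iff)
  have "\<exists>v \<xi>. v ^ n = x powi s \<and> root_of_unity \<xi> \<and> \<mu> x = \<xi> * v" if "x \<in> Lam" for x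
  proof -
    have "x \<noteq> 0"
      using that by (auto simp: Lam_def tribP_def)
    with \<mu>[OF that] \<open>A * int n = s * int k\<close> \<open>0 < k\<close> \<open>0 < n\<close> show ?thesis
      by (metis twist_by_root_of_unity[OF alg_closed])
  qed
  then obtain \<nu> \<xi> where \<nu>\<xi>: "\<And>x. x \<in> Lam \<Longrightarrow>
      \<nu> x ^ n = x powi s \<and> root_of_unity (\<xi> x) \<and> \<mu> x = \<xi> x * \<nu> x"
    by metis
  obtain a b c :: 'a where abc: "Lam = {a, b, c}" "a \<noteq> b" "a \<noteq> c" "b \<noteq> c"
    using tribP_three_distinct_roots[OF alg_closed] by blast
  have "a \<in> Lam" "b \<in> Lam" "c \<in> Lam"
    unfolding abc(1) by simp_all
  have "(\<Sum>x\<in>Lam. cc x * \<mu> x) = cc a * \<mu> a + cc b * \<mu> b + cc c * \<mu> c"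
    unfolding abc(1) using abc(2-4) by (simp add: add.assoc)
  with sum have "\<xi> a * cc a * \<nu> a + \<xi> b * cc b * \<nu> b + \<xi> c * cc c * \<nu> c = 0"
    using \<nu>\<xi>[OF \<open>a \<in> Lam\<close>] \<nu>\<xi>[OF \<open>b \<in> Lam\<close>] \<nu>\<xi>[OF \<open>c \<in> Lam\<close>] by (simp add: ac_simps)
  with abc \<nu>\<xi>[OF \<open>a \<in> Lam\<close>] \<nu>\<xi>[OF \<open>b \<in> Lam\<close>] \<nu>\<xi>[OF \<open>c \<in> Lam\<close>]
  have "Lam = {a, b, c} \<and> a \<noteq> b \<and> a \<noteq> c \<and> b \<noteq> c \<and>
      \<nu> a ^ n = a powi s \<and> \<nu> b ^ n = b powi s \<and> \<nu> c ^ n = c powi s \<and>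
      root_of_unity (\<xi> a) \<and> root_of_unity (\<xi> b) \<and> root_of_unity (\<xi> c) \<and>
      \<xi> a * cc a * \<nu> a + \<xi> b * cc b * \<nu> b + \<xi> c * cc c * \<nu> c = 0"
    by blast
  then show ?thesis
    unfolding twisted_rational_zero_def q m prod.case nat_int by (intro exI) assumption
qed

theorem lemma17:
  fixes p :: nat and nabs :: "'a::field_char_0 \<Rightarrow> real" and l :: nat and b :: rat
  assumes "prime p" and "p \<notin> {2, 3, 11}"
    and "Cp_like p nabs"
    and "l < tribN p nabs"
    and "\<not> int p dvd snd (quotient_of b)"
    and "f_ell p nabs l (of_rat b) = 0"
  shows "twisted_rational_zero TYPE('a) (of_nat l + of_nat (tribN p nabs) * b)"
proof -
  have "odd p"
    using assms(1,2) prime_ge_2_nat[of p] by (intro prime_odd_nat) auto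
  then interpret padic_field nabs p
    using assms(1,3) by (intro Cp_like_imp_padic_field)
  define N where "N = tribN p nabs"
  obtain s m where b: "quotient_of b = (s, m)"
    by fastforce
  define \<mu> where "\<mu> x = x ^ l * pexp nabs (of_rat b * plog nabs (x ^ N))" for x :: 'a
  obtain m' where m': "m = int m'" and "0 < m'"
    using pos_int_cases[OF quotient_of_denom_pos[OF b]] by blast
  have "\<mu> x ^ m' = x powi (int l * int m' + int N * s)" if "x \<in> Lam" for x
  proof -
    have "x \<noteq> 0"
      using that by (auto simp: Lam_def tribP_def)
    have "nabs (x ^ N - 1) \<le> 1 / real p"
      using tribN_spec that unfolding N_def by blast
    then have "\<mu> x ^ m' = (x ^ l) ^ m' * (x ^ N) powi s"
      unfolding \<mu>_def power_mult_distrib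
      using pexp_rat_mult_plog_power[OF _ b assms(5)[unfolded b snd_conv]] m' by simp
    also have "\<dots> = x powi (int l * int m' + int N * s)"
      using \<open>x \<noteq> 0\<close> by (simp add: power_int_add power_int_mult)
    finally show ?thesis .
  qed
  moreover have "(\<Sum>x\<in>Lam. cc x * \<mu> x) = 0"
    using assms(6) unfolding f_ell_def \<mu>_def N_def by (simp add: ac_simps)
  moreover have "of_nat l + of_nat N * b = of_int (int l * int m' + int N * s) / of_nat m'"
    using quotient_of_div[OF b] quotient_of_denom_pos[OF b] m' by (simp add: field_simps)
  moreover have "\<forall>q::'a poly. 0 < degree q \<longrightarrow> (\<exists>x. poly q x = 0)"
    using assms(3) unfolding Cp_like_def by blast
  ultimately show ?thesis
    using \<open>0 < m'\<close> unfolding N_def[symmetric]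
    by (intro twisted_rational_zeroI[where k = m' and A = "int l * int m' + int N * s"]) simp_all
qed

end
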